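(* Let $L$ be an $n\times n$ nonsingular M-matrix with integer entries, and let $\phi_1,\dots,\phi_n:\mathbb{R}\to\mathbb{R}$ be non-negative strictly increasing functions. Define $E_\phi(q)=\sum_{i=1}^n\phi_i((L^{-1}q)_i)$ for $q\in\mathbb{Z}^n$. For every $f\in\mathbb{Z}^n$ with $f\ge0$, the problem $\min_{g\sim f,\ g\ge0}E_\phi(g)$ (over $g\in\mathbb{Z}^n$) has a unique solution.
   Context: A Z-matrix is a square real matrix whose off-diagonal entries are all $\le 0$. A nonsingular M-matrix is a Z-matrix $L$ that is invertible with $L^{-1}$ having all entries nonnegative. Vector inequalities are entrywise. For $f,g\in\mathbb{Z}^n$, $f\sim g$ means $g-f=Lz$ for some $z\in\mathbb{Z}^n$. *)

theory Defs
  imports "HOL-Analysis.Analysis"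
begin

definition Z_matrix :: "real^'n^'n \<Rightarrow> bool" where
  "Z_matrix A \<longleftrightarrow> (\<forall>i j. i \<noteq> j \<longrightarrow> A $ i $ j \<le> 0)"

definition nonsingular_M_matrix :: "real^'n^'n \<Rightarrow> bool" where
  "nonsingular_M_matrix A \<longleftrightarrow>
     Z_matrix A \<and> invertible A \<and> (\<forall>i j. matrix_inv A $ i $ j \<ge> 0)"

definition real_mat :: "int^'n^'n \<Rightarrow> real^'n^'n" where
  "real_mat L = (\<chi> i j. real_of_int (L $ i $ j))"

definition real_vec :: "int^'n \<Rightarrow> real^'n" where
  "real_vec q = (\<chi> i. real_of_int (q $ i))"

definition equiv_L :: "int^'n^'n \<Rightarrow> int^'n \<Rightarrow> int^'n \<Rightarrow> bool" where
  "equiv_L L f g \<longleftrightarrow> (\<exists>z :: int^'n. g - f = L *v z)"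

definition E_phi :: "int^'n^'n \<Rightarrow> ('n \<Rightarrow> real \<Rightarrow> real) \<Rightarrow> int^'n \<Rightarrow> real" where
  "E_phi L \<phi> q = (\<Sum>i\<in>UNIV. \<phi> i ((matrix_inv (real_mat L) *v real_vec q) $ i))"

end

theory Submission
  imports Defs
begin

text \<open>Write every g \<sim> f as f + L z. Applying L\<inverse> gives L\<inverse>g = L\<inverse>f + z, so the energy is
  \<open>\<Sum>\<^sub>i \<phi>\<^sub>i((L\<inverse>f)\<^sub>i + z\<^sub>i)\<close>, strictly increasing in z for the componentwise order,
  and L\<inverse> \<ge> 0 bounds the admissible z (those with f + L z \<ge> 0) from below. Since L is a
  Z-matrix, the admissible z are closed under componentwise minima, so there is a least one,
  and it is the unique minimiser.\<close>

lemma matrix_inv_mult_left: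
  assumes "invertible (A :: 'a::semiring_1^'n^'m)"
  shows "matrix_inv A ** A = mat 1"
proof -
  have "\<exists>A'::'a^'m^'n. A ** A' = mat 1 \<and> A' ** A = mat 1"
    using assms by (simp add: invertible_def)
  then show ?thesis unfolding matrix_inv_def by (rule someI2_ex) auto
qed

lemma nonneg_matrix_vector_mult:
  fixes A :: "'a::linordered_semidom^'n^'m"
  assumes "\<And>i j. 0 \<le> A $ i $ j" and "0 \<le> x"
  shows "0 \<le> A *v x"
  using assms by (auto simp: less_eq_vec_def matrix_vector_mult_def intro!: sum_nonneg)

lemma real_vec_add_mult:
  "real_vec (f + L *v z) = real_vec f + real_mat L *v real_vec z"
  by (simp add: vec_eq_iff real_vec_def real_mat_def matrix_vector_mult_def of_int_sum)

lemma real_vec_nonneg_iff: "0 \<le> real_vec q \<longleftrightarrow> 0 \<le> q"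
  by (simp add: less_eq_vec_def real_vec_def)

lemma matrix_inv_real_vec_shift:
  assumes "invertible (real_mat L)"
  shows "matrix_inv (real_mat L) *v real_vec (f + L *v z)
           = matrix_inv (real_mat L) *v real_vec f + real_vec z"
  using matrix_inv_mult_left[OF assms]
  by (simp add: real_vec_add_mult matrix_vector_right_distrib matrix_vector_mul_assoc)

lemma E_phi_shift:
  assumes "invertible (real_mat L)"
  shows "E_phi L \<phi> (f + L *v z) =
           (\<Sum>i\<in>UNIV. \<phi> i ((matrix_inv (real_mat L) *v real_vec f) $ i + real_of_int (z $ i)))"
  unfolding E_phi_def matrix_inv_real_vec_shift[OF assms] by (simp add: real_vec_def)

lemma E_phi_shift_strict_mono:
  fixes L :: "int^'n^'n"
  assumes "invertible (real_mat L)" and "\<And>i. strict_mono (\<phi> i)"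
  shows "strict_mono (\<lambda>z. E_phi L \<phi> (f + L *v z))"
proof (rule strict_monoI)
  fix z w :: "int^'n"
  assume "z < w"
  then have le: "\<And>i. z $ i \<le> w $ i" and "z \<noteq> w"
    by (auto simp: less_vec_def less_eq_vec_def)
  then obtain k where "z $ k < w $ k"
    by (metis order.not_eq_order_implies_strict vec_eq_iff)
  let ?c = "matrix_inv (real_mat L) *v real_vec f"
  have "(\<Sum>i\<in>UNIV. \<phi> i (?c $ i + real_of_int (z $ i))) < (\<Sum>i\<in>UNIV. \<phi> i (?c $ i + real_of_int (w $ i)))"
  proof (rule sum_strict_mono_ex1)
    show "\<forall>i\<in>UNIV. \<phi> i (?c $ i + real_of_int (z $ i)) \<le> \<phi> i (?c $ i + real_of_int (w $ i))"
      using le strict_mono_less_eq[OF assms(2)] by simp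
    show "\<exists>i\<in>UNIV. \<phi> i (?c $ i + real_of_int (z $ i)) < \<phi> i (?c $ i + real_of_int (w $ i))"
      using \<open>z $ k < w $ k\<close> strict_mono_less[OF assms(2)] by auto
  qed simp
  then show "E_phi L \<phi> (f + L *v z) < E_phi L \<phi> (f + L *v w)"
    unfolding E_phi_shift[OF assms(1)] .
qed

lemma Z_matrix_row_antimono:
  fixes L :: "'a::linordered_idom^'n^'n"
  assumes Z: "\<And>i j. i \<noteq> j \<Longrightarrow> L $ i $ j \<le> 0" and "m \<le> z" and "m $ i = z $ i"
  shows "(L *v z) $ i \<le> (L *v m) $ i"
  unfolding matrix_vector_mult_def vec_lambda_beta
proof (rule sum_mono)
  fix j
  show "L $ i $ j * z $ j \<le> L $ i $ j * m $ j"
  proof (cases "j = i")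
    case False
    then show ?thesis
      using Z[OF not_sym[OF False]] \<open>m \<le> z\<close> by (simp add: less_eq_vec_def mult_left_mono_neg)
  qed (use \<open>m $ i = z $ i\<close> in simp)
qed

lemma Z_matrix_shift_nonneg_min:
  fixes L :: "'a::linordered_idom^'n^'n"
  assumes Z: "\<And>i j. i \<noteq> j \<Longrightarrow> L $ i $ j \<le> 0"
    and "0 \<le> f + L *v z" and "0 \<le> f + L *v w"
  shows "0 \<le> f + L *v (\<chi> k. min (z $ k) (w $ k))"
  unfolding less_eq_vec_def
proof
  fix i
  let ?m = "\<chi> k. min (z $ k) (w $ k)"
  have row_nonneg: "0 \<le> (f + L *v ?m) $ i"
    if "?m \<le> y" and "?m $ i = y $ i" and "0 \<le> f + L *v y" for y
  proof -
    have "0 \<le> (f + L *v y) $ i" using \<open>0 \<le> f + L *v y\<close> by (simp add: less_eq_vec_def)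
    also have "\<dots> \<le> (f + L *v ?m) $ i"
      using Z_matrix_row_antimono[OF Z that(1,2)] by (simp add: add_left_mono)
    finally show ?thesis .
  qed
  have "?m \<le> z" "?m \<le> w" by (simp_all add: less_eq_vec_def)
  then show "0 $ i \<le> (f + L *v ?m) $ i"
    using row_nonneg assms(2,3) by (cases "z $ i \<le> w $ i") auto
qed

text \<open>Among the elements of S take one with least coordinate sum; its minimum with any
  other element lies in S and has no larger sum, so the two coincide.\<close>

lemma min_closed_bounded_below_has_least:
  fixes S :: "(int^'n) set"
  assumes "s \<in> S" and bounded: "\<And>z. z \<in> S \<Longrightarrow> b \<le> z"
    and closed: "\<And>z w. z \<in> S \<Longrightarrow> w \<in> S \<Longrightarrow> (\<chi> k. min (z $ k) (w $ k)) \<in> S"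
  shows "\<exists>m\<in>S. \<forall>z\<in>S. m \<le> z"
proof -
  define height where "height z = nat ((\<Sum>i\<in>UNIV. z $ i) - (\<Sum>i\<in>UNIV. b $ i))" for z :: "int^'n"
  have sum_ge: "(\<Sum>i\<in>UNIV. b $ i) \<le> (\<Sum>i\<in>UNIV. z $ i)" if "z \<in> S" for z
    using bounded[OF that] by (intro sum_mono) (simp add: less_eq_vec_def)
  obtain m where "m \<in> S" and m_least: "\<And>z. z \<in> S \<Longrightarrow> height m \<le> height z"
    using ex_has_least_nat[of "\<lambda>z. z \<in> S" s height] \<open>s \<in> S\<close> by blast
  have "m \<le> z" if "z \<in> S" for z
  proof -
    define m' where "m' = (\<chi> k. min (m $ k) (z $ k))"
    have "m' \<in> S" unfolding m'_def using closed[OF \<open>m \<in> S\<close> that] .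
    have le: "\<And>k. m' $ k \<le> m $ k" by (simp add: m'_def)
    have "(\<Sum>i\<in>UNIV. m $ i) \<le> (\<Sum>i\<in>UNIV. m' $ i)"
      using m_least[OF \<open>m' \<in> S\<close>] sum_ge[OF \<open>m' \<in> S\<close>] sum_ge[OF \<open>m \<in> S\<close>]
      by (simp add: height_def)
    then have "(\<Sum>i\<in>UNIV. m $ i - m' $ i) = 0"
      using sum_mono[of UNIV "\<lambda>k. m' $ k" "\<lambda>k. m $ k"] le by (simp add: sum_subtractf)
    then have "m' = m"
      using sum_nonneg_eq_0_iff[of UNIV "\<lambda>k. m $ k - m' $ k"] le by (simp add: vec_eq_iff)
    then show "m \<le> z"
      unfolding less_eq_vec_def by (metis m'_def min.absorb_iff1 vec_lambda_beta)
  qed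
  with \<open>m \<in> S\<close> show ?thesis by blast
qed

lemma M_matrix_shift_lower_bound:
  assumes "nonsingular_M_matrix (real_mat L)" and "0 \<le> f + L *v z"
  shows "(\<chi> i. \<lceil>- (matrix_inv (real_mat L) *v real_vec f) $ i\<rceil>) \<le> z"
proof -
  have "invertible (real_mat L)" and "\<And>i j. 0 \<le> matrix_inv (real_mat L) $ i $ j"
    using assms(1) by (auto simp: nonsingular_M_matrix_def)
  then have "0 \<le> matrix_inv (real_mat L) *v real_vec f + real_vec z"
    using nonneg_matrix_vector_mult real_vec_nonneg_iff assms(2)
    by (metis matrix_inv_real_vec_shift)
  then have "0 \<le> (matrix_inv (real_mat L) *v real_vec f) $ i + real_of_int (z $ i)" for i
    by (simp add: less_eq_vec_def real_vec_def)
  then show ?thesis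
    unfolding less_eq_vec_def ceiling_le_iff vec_lambda_beta by (smt (verit))
qed

lemma M_matrix_shift_has_least:
  assumes "nonsingular_M_matrix (real_mat L)" and "0 \<le> f"
  shows "\<exists>m. 0 \<le> f + L *v m \<and> (\<forall>z. 0 \<le> f + L *v z \<longrightarrow> m \<le> z)"
proof -
  have Z: "\<And>i j. i \<noteq> j \<Longrightarrow> L $ i $ j \<le> 0"
    using assms(1) by (auto simp: nonsingular_M_matrix_def Z_matrix_def real_mat_def)
  have "\<exists>m\<in>{z. 0 \<le> f + L *v z}. \<forall>z\<in>{z. 0 \<le> f + L *v z}. m \<le> z"
    using assms by (intro min_closed_bounded_below_has_least[where s = 0])
      (auto intro: M_matrix_shift_lower_bound Z_matrix_shift_nonneg_min[OF Z])
  then show ?thesis by blast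
qed

lemma equiv_L_iff: "equiv_L L f g \<longleftrightarrow> (\<exists>z. g = f + L *v z)"
  unfolding equiv_L_def by (metis add.commute diff_add_cancel add_diff_cancel_left')

theorem mainTheorem14:
  fixes L :: "int^'n^'n" and \<phi> :: "'n \<Rightarrow> real \<Rightarrow> real" and f :: "int^'n"
  assumes "nonsingular_M_matrix (real_mat L)"
    and "\<And>i x. \<phi> i x \<ge> 0"
    and "\<And>i. strict_mono (\<phi> i)"
    and "\<And>i. f $ i \<ge> 0"
  shows "\<exists>!g :: int^'n. equiv_L L f g \<and> (\<forall>i. g $ i \<ge> 0) \<and>
           (\<forall>h :: int^'n. equiv_L L f h \<and> (\<forall>i. h $ i \<ge> 0) \<longrightarrow> E_phi L \<phi> g \<le> E_phi L \<phi> h)"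
proof -
  let ?E = "\<lambda>z. E_phi L \<phi> (f + L *v z)"
  have "0 \<le> f" using assms(4) by (simp add: less_eq_vec_def)
  then obtain m where m: "0 \<le> f + L *v m" and least: "\<And>z. 0 \<le> f + L *v z \<Longrightarrow> m \<le> z"
    using M_matrix_shift_has_least[OF assms(1)] by blast
  have "strict_mono ?E"
    using assms(1,3) by (intro E_phi_shift_strict_mono) (auto simp: nonsingular_M_matrix_def)
  then have E_le: "?E m \<le> ?E z" and E_eq: "?E z \<le> ?E m \<Longrightarrow> z = m"
    if "0 \<le> f + L *v z" for z
    using least[OF that] by (auto simp: strict_mono_less order.order_iff_strict dest: strict_monoD)
  show ?thesis
    unfolding equiv_L_iff less_eq_vec_def[symmetric, of 0, simplified]
    using m E_le E_eq by (intro ex1I[of _ "f + L *v m"]) blast+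
qed

end
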